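(* For a vertex-colored graph $(G,\sigma)$ whose coloring uses exactly two colors, the following are equivalent: (1) $(G,\sigma)$ is a $2$-RBMG; (2) $(G,\sigma)$ is a properly $2$-colored bicluster graph containing at least one edge; (3) $(G,\sigma)$ is a $2$-RBMG and an orthology graph; (4) $(G,\sigma)$ is a $2$-hc-cograph.
   Context: All graphs are finite, simple and undirected. A vertex coloring is a surjective map $\sigma:V\to S$; $(G,\sigma)$ is properly colored if adjacent vertices receive distinct colors. A phylogenetic tree $T$ on $L$ is a rooted tree with root $\rho_T$ and leaf set $L$ whose inner vertices other than the root have degree at least three; $u\preceq_T v$ means $v$ lies on the path from the root to $u$, and $\mathrm{lca}_T$ denotes last common ancestor. For a surjective leaf coloring $\sigma:L\to S$, a leaf $y$ is a best match of $x$ if $\sigma(x)\neq\sigma(y)$ and $\mathrm{lca}_T(x,y)\preceq_T\mathrm{lca}_T(x,y')$ for all $y'$ with $\sigma(y')=\sigma(y)$; reciprocal best matches are pairs each a best match of the other; $G(T,\sigma)$ is the graph on $L$ with edges the reciprocal best matches. A properly colored $(G,\sigma)$ is an RBMG if $G(T,\sigma)=(G,\sigma)$ for some leaf-colored tree $(T,\sigma)$; it is an $n$-RBMG if moreover $|\sigma(V)|=n$. A graph $G$ is an orthology graph if there is a phylogenetic tree $T$ on $V(G)$ with inner-vertex labeling $t:V^0(T)\to\{0,1\}$ such that $xy\in E(G)$ iff $t(\mathrm{lca}_T(x,y))=1$. For colored vertex-disjoint graphs, their join/disjoint union carry the combined coloring. A colored graph $(G,\sigma)$ is a hierarchically colored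 cograph (hc-cograph) if (K1) it is a single colored vertex, or (K2) $(G,\sigma)=(H,\sigma_H)\Join(H',\sigma_{H'})$ (join: disjoint union plus all edges between $V(H)$ and $V(H')$) with $\sigma(V(H))\cap\sigma(V(H'))=\emptyset$, or (K3) $(G,\sigma)=(H,\sigma_H)\,\dot\cup\,(H',\sigma_{H'})$ with $\sigma(V(H))\cap\sigma(V(H'))\in\{\sigma(V(H)),\sigma(V(H'))\}$, where in (K2),(K3) both $(H,\sigma_H),(H',\sigma_{H'})$ are hc-cographs; an $n$-hc-cograph is one using exactly $n$ colors. A biclique is either $K_1$ or a complete bipartite graph; a bicluster graph is a graph whose connected components are bicliques. *)

theory Defs
  imports Main
begin

definition simple_graph :: "'a set \<Rightarrow> 'a set set \<Rightarrow> bool" where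
  "simple_graph V E \<equiv> finite V \<and> (\<forall>e\<in>E. \<exists>x y. e = {x, y} \<and> x \<noteq> y \<and> x \<in> V \<and> y \<in> V)"

definition properly_colored :: "'a set set \<Rightarrow> ('a \<Rightarrow> 'c) \<Rightarrow> bool" where
  "properly_colored E \<sigma> \<equiv> (\<forall>x y. {x, y} \<in> E \<longrightarrow> \<sigma> x \<noteq> \<sigma> y)"

text \<open>A rooted tree is given by its finite vertex set VT, its root r and the ancestor order
  le (le u v  means  u \<preceq>_T v, i.e. v lies on the path from the root to u).
  It is a partial order with greatest element r in which the ancestors of every vertex form
  a chain (the Hasse diagram of such an order is exactly a rooted tree).\<close>

definition rooted_tree :: "'v set \<Rightarrow> ('v \<Rightarrow> 'v \<Rightarrow> bool) \<Rightarrow> 'v \<Rightarrow> bool" where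
  "rooted_tree VT le r \<equiv>
     finite VT \<and> r \<in> VT \<and>
     (\<forall>v\<in>VT. le v v) \<and>
     (\<forall>u\<in>VT. \<forall>v\<in>VT. le u v \<and> le v u \<longrightarrow> u = v) \<and>
     (\<forall>u\<in>VT. \<forall>v\<in>VT. \<forall>w\<in>VT. le u v \<and> le v w \<longrightarrow> le u w) \<and>
     (\<forall>v\<in>VT. le v r) \<and>
     (\<forall>v\<in>VT. \<forall>a\<in>VT. \<forall>b\<in>VT. le v a \<and> le v b \<longrightarrow> le a b \<or> le b a)"

definition tree_leaves :: "'v set \<Rightarrow> ('v \<Rightarrow> 'v \<Rightarrow> bool) \<Rightarrow> 'v set" where
  "tree_leaves VT le = {v \<in> VT. \<forall>u\<in>VT. le u v \<longrightarrow> u = v}"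

definition tree_children :: "'v set \<Rightarrow> ('v \<Rightarrow> 'v \<Rightarrow> bool) \<Rightarrow> 'v \<Rightarrow> 'v set" where
  "tree_children VT le v =
     {u \<in> VT. le u v \<and> u \<noteq> v \<and> (\<forall>w\<in>VT. le u w \<and> le w v \<longrightarrow> w = u \<or> w = v)}"

text \<open>Phylogenetic tree on L: leaf set L, and every inner vertex other than the root has
  degree at least three, i.e. (one parent plus) at least two children.\<close>

definition phylo_tree :: "'v set \<Rightarrow> ('v \<Rightarrow> 'v \<Rightarrow> bool) \<Rightarrow> 'v \<Rightarrow> 'v set \<Rightarrow> bool" where
  "phylo_tree VT le r L \<equiv>
     rooted_tree VT le r \<and> tree_leaves VT le = L \<and>
     (\<forall>v \<in> VT - L - {r}. card (tree_children VT le v) \<ge> 2)"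

definition lca :: "'v set \<Rightarrow> ('v \<Rightarrow> 'v \<Rightarrow> bool) \<Rightarrow> 'v \<Rightarrow> 'v \<Rightarrow> 'v" where
  "lca VT le x y =
     (THE z. z \<in> VT \<and> le x z \<and> le y z \<and> (\<forall>w\<in>VT. le x w \<and> le y w \<longrightarrow> le z w))"

text \<open>Trees on a leaf set V :: 'a set are represented with vertex type 'a + nat, the leaf
  x \<in> V being the tree vertex Inl x (every finite tree on V is isomorphic to such a tree).\<close>

definition best_match ::
  "('a + nat) set \<Rightarrow> (('a + nat) \<Rightarrow> ('a + nat) \<Rightarrow> bool) \<Rightarrow> ('a \<Rightarrow> 'c) \<Rightarrow> 'a set \<Rightarrow> 'a \<Rightarrow> 'a \<Rightarrow> bool" where
  "best_match VT le \<sigma> V x y \<equiv>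
     x \<in> V \<and> y \<in> V \<and> \<sigma> x \<noteq> \<sigma> y \<and>
     (\<forall>y'\<in>V. \<sigma> y' = \<sigma> y \<longrightarrow> le (lca VT le (Inl x) (Inl y)) (lca VT le (Inl x) (Inl y')))"

definition rbm_edges ::
  "('a + nat) set \<Rightarrow> (('a + nat) \<Rightarrow> ('a + nat) \<Rightarrow> bool) \<Rightarrow> ('a \<Rightarrow> 'c) \<Rightarrow> 'a set \<Rightarrow> 'a set set" where
  "rbm_edges VT le \<sigma> V =
     {{x, y} | x y. best_match VT le \<sigma> V x y \<and> best_match VT le \<sigma> V y x}"

definition is_RBMG :: "'a set \<Rightarrow> 'a set set \<Rightarrow> ('a \<Rightarrow> 'c) \<Rightarrow> bool" where
  "is_RBMG V E \<sigma> \<equiv> properly_colored E \<sigma> \<and>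
     (\<exists>VT le r. phylo_tree VT le r (Inl ` V) \<and> rbm_edges VT le \<sigma> V = E)"

definition is_n_RBMG :: "nat \<Rightarrow> 'a set \<Rightarrow> 'a set set \<Rightarrow> ('a \<Rightarrow> 'c) \<Rightarrow> bool" where
  "is_n_RBMG n V E \<sigma> \<equiv> is_RBMG V E \<sigma> \<and> card (\<sigma> ` V) = n"

definition orthology_graph :: "'a set \<Rightarrow> 'a set set \<Rightarrow> bool" where
  "orthology_graph V E \<equiv>
     (\<exists>VT le r (t :: 'a + nat \<Rightarrow> bool). phylo_tree VT le r (Inl ` V) \<and>
        (\<forall>x\<in>V. \<forall>y\<in>V. x \<noteq> y \<longrightarrow> ({x, y} \<in> E \<longleftrightarrow> t (lca VT le (Inl x) (Inl y)))))"

text \<open>The labeling t : V0(T) -> {0,1} is encoded as a boolean function (True = 1); only its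
  values on inner vertices matter, since the lca of two distinct leaves is inner.\<close>

inductive hc_cograph :: "('a \<Rightarrow> 'c) \<Rightarrow> 'a set \<Rightarrow> 'a set set \<Rightarrow> bool" for \<sigma> where
  K1: "hc_cograph \<sigma> {x} {}"
| K2: "\<lbrakk> hc_cograph \<sigma> V1 E1; hc_cograph \<sigma> V2 E2; V1 \<inter> V2 = {};
         \<sigma> ` V1 \<inter> \<sigma> ` V2 = {} \<rbrakk>
       \<Longrightarrow> hc_cograph \<sigma> (V1 \<union> V2) (E1 \<union> E2 \<union> {{a, b} | a b. a \<in> V1 \<and> b \<in> V2})"
| K3: "\<lbrakk> hc_cograph \<sigma> V1 E1; hc_cograph \<sigma> V2 E2; V1 \<inter> V2 = {};
         \<sigma> ` V1 \<inter> \<sigma> ` V2 \<in> {\<sigma> ` V1, \<sigma> ` V2} \<rbrakk>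
       \<Longrightarrow> hc_cograph \<sigma> (V1 \<union> V2) (E1 \<union> E2)"

definition is_n_hc_cograph :: "nat \<Rightarrow> 'a set \<Rightarrow> 'a set set \<Rightarrow> ('a \<Rightarrow> 'c) \<Rightarrow> bool" where
  "is_n_hc_cograph n V E \<sigma> \<equiv> hc_cograph \<sigma> V E \<and> card (\<sigma> ` V) = n"

definition connected_component :: "'a set \<Rightarrow> 'a set set \<Rightarrow> 'a \<Rightarrow> 'a set" where
  "connected_component V E x = {y \<in> V. (\<lambda>u v. {u, v} \<in> E)\<^sup>*\<^sup>* x y}"

definition biclique :: "'a set \<Rightarrow> 'a set set \<Rightarrow> bool" where
  "biclique C F \<equiv>
     (card C = 1 \<and> F = {}) \<or>
     (\<exists>A B. A \<noteq> {} \<and> B \<noteq> {} \<and> A \<inter> B = {} \<and> A \<union> B = C \<and>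
            F = {{a, b} | a b. a \<in> A \<and> b \<in> B})"

definition bicluster_graph :: "'a set \<Rightarrow> 'a set set \<Rightarrow> bool" where
  "bicluster_graph V E \<equiv>
     (\<forall>x\<in>V. biclique (connected_component V E x)
                      {e \<in> E. e \<subseteq> connected_component V E x})"

end

theory Submission
  imports Defs
begin

text \<open>With two colors a properly colored graph is bipartite, and it is a bicluster graph iff it is
  \<open>P4\<close>-closed: every path \<open>x - y - x' - y'\<close> closes to a 4-cycle.

  Reciprocal best match graphs are \<open>P4\<close>-closed, because along such a path all three edges share
  one last common ancestor, which is then a common ancestor of \<open>x\<close> and \<open>y'\<close>; and two differently
  colored leaves whose last common ancestor is minimal are reciprocal best matches, so there is an
  edge. Two-colored hc-cographs are \<open>P4\<close>-closed by induction: a join of two one-colored, hence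
  edgeless, pieces is complete bipartite, and disjoint unions preserve the property.

  Conversely, a two-colored bicluster graph is glued together from its bicliques by (K3), and it is
  realised by the tree of the hierarchy formed by \<open>V\<close>, the singletons, the components, their color
  classes and one extra cluster that joins a nontrivial component with the isolated vertices of one
  color. In that tree the edges are exactly the pairs whose last common ancestor is a component,
  which also provides the orthology labeling.\<close>

section \<open>Rooted trees and last common ancestors\<close>

definition is_lca :: "'v set \<Rightarrow> ('v \<Rightarrow> 'v \<Rightarrow> bool) \<Rightarrow> 'v \<Rightarrow> 'v \<Rightarrow> 'v \<Rightarrow> bool" where
  "is_lca VT le p q z \<longleftrightarrow> z \<in> VT \<and> le p z \<and> le q z \<and> (\<forall>w\<in>VT. le p w \<and> le q w \<longrightarrow> le z w)"

context
  fixes VT le r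
  assumes tree: "rooted_tree VT le r"
begin

lemma rooted_tree_finite: "finite VT"
  using tree unfolding rooted_tree_def by blast

lemma rooted_tree_root: "r \<in> VT"
  using tree unfolding rooted_tree_def by blast

lemma rooted_tree_refl: "v \<in> VT \<Longrightarrow> le v v"
  using tree unfolding rooted_tree_def by blast

lemma rooted_tree_antisym: "u \<in> VT \<Longrightarrow> v \<in> VT \<Longrightarrow> le u v \<Longrightarrow> le v u \<Longrightarrow> u = v"
  using tree unfolding rooted_tree_def by blast

lemma rooted_tree_trans: "u \<in> VT \<Longrightarrow> v \<in> VT \<Longrightarrow> w \<in> VT \<Longrightarrow> le u v \<Longrightarrow> le v w \<Longrightarrow> le u w"
  using tree unfolding rooted_tree_def by (metis (no_types))

lemma rooted_tree_le_root: "v \<in> VT \<Longrightarrow> le v r"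
  using tree unfolding rooted_tree_def by blast

lemma rooted_tree_ancestors_chain:
  "v \<in> VT \<Longrightarrow> a \<in> VT \<Longrightarrow> b \<in> VT \<Longrightarrow> le v a \<Longrightarrow> le v b \<Longrightarrow> le a b \<or> le b a"
  using tree unfolding rooted_tree_def by (metis (no_types))

lemma rooted_tree_descendants_card_less:
  assumes "a \<in> VT" "b \<in> VT" "le a b" "a \<noteq> b"
  shows "card {w\<in>VT. le w a} < card {w\<in>VT. le w b}"
proof (rule psubset_card_mono)
  show "finite {w\<in>VT. le w b}"
    using rooted_tree_finite by simp
  show "{w\<in>VT. le w a} \<subset> {w\<in>VT. le w b}"
    using assms rooted_tree_trans rooted_tree_antisym rooted_tree_refl by blast
qed

lemma rooted_tree_has_minimal:
  assumes "S \<subseteq> VT" "s \<in> S"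
  obtains m where "m \<in> S" "\<And>s. s \<in> S \<Longrightarrow> le s m \<Longrightarrow> s = m"
proof -
  obtain m where m: "m \<in> S"
    and least: "\<And>s. s \<in> S \<Longrightarrow> card {w\<in>VT. le w m} \<le> card {w\<in>VT. le w s}"
    using ex_has_least_nat[of "\<lambda>s. s \<in> S" s "\<lambda>s. card {w\<in>VT. le w s}"] assms(2) by blast
  have "s = m" if "s \<in> S" "le s m" for s
    using least[of s] rooted_tree_descendants_card_less[of s m] that m assms(1) by fastforce
  with m that show thesis by blast
qed

lemma lca_eqI: "is_lca VT le p q z \<Longrightarrow> lca VT le p q = z"
  unfolding lca_def is_lca_def using rooted_tree_antisym by (intro the_equality) blast+

lemma is_lca_lca:
  assumes "p \<in> VT" "q \<in> VT"
  shows "is_lca VT le p q (lca VT le p q)"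
proof -
  let ?S = "{w\<in>VT. le p w \<and> le q w}"
  have "r \<in> ?S"
    using rooted_tree_root rooted_tree_le_root assms by blast
  then obtain m where m: "m \<in> ?S" and minimal: "\<And>s. s \<in> ?S \<Longrightarrow> le s m \<Longrightarrow> s = m"
    using rooted_tree_has_minimal[of ?S] by blast
  have "le m w" if "w \<in> ?S" for w
    using rooted_tree_ancestors_chain[of p m w] minimal[of w] that m assms
      rooted_tree_refl[of m] by auto
  then have "is_lca VT le p q m"
    using m unfolding is_lca_def by blast
  then show ?thesis
    using lca_eqI by simp
qed

lemma lca_in_tree: "p \<in> VT \<Longrightarrow> q \<in> VT \<Longrightarrow> lca VT le p q \<in> VT"
  and lca_upper1: "p \<in> VT \<Longrightarrow> q \<in> VT \<Longrightarrow> le p (lca VT le p q)"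
  and lca_upper2: "p \<in> VT \<Longrightarrow> q \<in> VT \<Longrightarrow> le q (lca VT le p q)"
  and lca_least: "p \<in> VT \<Longrightarrow> q \<in> VT \<Longrightarrow> w \<in> VT \<Longrightarrow> le p w \<Longrightarrow> le q w \<Longrightarrow> le (lca VT le p q) w"
  using is_lca_lca unfolding is_lca_def by blast+

end

lemma lca_commute: "lca VT le p q = lca VT le q p"
  unfolding lca_def by (simp only: conj_ac)

section \<open>Hierarchies and their trees\<close>

definition hierarchy :: "'a set \<Rightarrow> 'a set set \<Rightarrow> bool" where
  "hierarchy V H \<longleftrightarrow> finite V \<and> H \<subseteq> Pow V \<and> V \<in> H \<and> {} \<notin> H \<and> (\<forall>x\<in>V. {x} \<in> H) \<and>
     (\<forall>C\<in>H. \<forall>D\<in>H. C \<subseteq> D \<or> D \<subseteq> C \<or> C \<inter> D = {})"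

text \<open>If no cluster contains both points, the intersection is over the empty family, i.e. \<open>UNIV\<close>.\<close>

definition least_cluster :: "'a set set \<Rightarrow> 'a \<Rightarrow> 'a \<Rightarrow> 'a set" where
  "least_cluster H x y = \<Inter>{C\<in>H. x \<in> C \<and> y \<in> C}"

context
  fixes V H
  assumes hier: "hierarchy V H"
begin

lemma hierarchy_finite: "finite H"
  using hier unfolding hierarchy_def by (meson finite_Pow_iff finite_subset)

lemma hierarchy_laminar: "C \<in> H \<Longrightarrow> D \<in> H \<Longrightarrow> C \<subseteq> D \<or> D \<subseteq> C \<or> C \<inter> D = {}"
  using hier unfolding hierarchy_def by blast

lemma least_cluster_in_hierarchy:
  assumes "x \<in> V" "y \<in> V"
  shows "least_cluster H x y \<in> H"
proof -
  let ?S = "{C\<in>H. x \<in> C \<and> y \<in> C}"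
  have "V \<in> ?S"
    using hier assms unfolding hierarchy_def by blast
  moreover have "finite ?S"
    using hierarchy_finite by simp
  ultimately obtain M where M: "M \<in> ?S" "\<forall>C\<in>?S. C \<subseteq> M \<longrightarrow> M = C"
    using finite_has_minimal[of ?S] by blast
  have "M \<subseteq> C" if "C \<in> ?S" for C
    using hierarchy_laminar[of M C] M that by blast
  then have "least_cluster H x y = M"
    using M(1) unfolding least_cluster_def by blast
  with M(1) show ?thesis by simp
qed

lemma hierarchy_maximal_subcluster:
  assumes "C \<in> H" "x \<in> C" "C \<noteq> {x}"
  obtains M where "M \<in> H" "x \<in> M" "M \<subset> C" "\<And>W. W \<in> H \<Longrightarrow> M \<subseteq> W \<Longrightarrow> W \<subseteq> C \<Longrightarrow> W = M \<or> W = C"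
proof -
  let ?S = "{D\<in>H. x \<in> D \<and> D \<subset> C}"
  have "{x} \<in> ?S"
    using hier assms unfolding hierarchy_def by blast
  moreover have "finite ?S"
    using hierarchy_finite by simp
  ultimately obtain M where M: "M \<in> ?S" "\<forall>D\<in>?S. M \<subseteq> D \<longrightarrow> M = D"
    using finite_has_maximal[of ?S] by blast
  show thesis
  proof (rule that)
    show "M \<in> H" "x \<in> M" "M \<subset> C"
      using M(1) by blast+
    show "W = M \<or> W = C" if "W \<in> H" "M \<subseteq> W" "W \<subseteq> C" for W
      using M that by blast
  qed
qed

end

lemma least_cluster_mem: "x \<in> least_cluster H x y" "y \<in> least_cluster H x y"
  unfolding least_cluster_def by blast+

lemma least_cluster_le: "C \<in> H \<Longrightarrow> x \<in> C \<Longrightarrow> y \<in> C \<Longrightarrow> least_cluster H x y \<subseteq> C"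
  unfolding least_cluster_def by blast

definition cluster_order :: "('a set \<Rightarrow> 'v) \<Rightarrow> 'a set set \<Rightarrow> 'v \<Rightarrow> 'v \<Rightarrow> bool" where
  "cluster_order node H u v \<longleftrightarrow> (\<exists>C\<in>H. \<exists>D\<in>H. u = node C \<and> v = node D \<and> C \<subseteq> D)"

context
  fixes V H and node :: "'a set \<Rightarrow> 'v"
  assumes hier: "hierarchy V H" and inj: "inj_on node H"
begin

lemma cluster_order_node:
  "C \<in> H \<Longrightarrow> D \<in> H \<Longrightarrow> cluster_order node H (node C) (node D) \<longleftrightarrow> C \<subseteq> D"
  unfolding cluster_order_def using inj by (auto dest: inj_onD)

lemma rooted_tree_cluster_order: "rooted_tree (node ` H) (cluster_order node H) (node V)"
proof -
  have H: "V \<in> H" "{} \<notin> H" "\<And>C. C \<in> H \<Longrightarrow> C \<subseteq> V"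
    using hier unfolding hierarchy_def by blast+
  have chain: "A \<subseteq> B \<or> B \<subseteq> A" if "C \<in> H" "A \<in> H" "B \<in> H" "C \<subseteq> A" "C \<subseteq> B" for A B C
    using hierarchy_laminar[OF hier, of A B] H(2) that by (metis Int_greatest subset_empty)
  show ?thesis
    unfolding rooted_tree_def Ball_image_comp comp_def
  proof (intro conjI ballI impI)
    show "finite (node ` H)"
      using hierarchy_finite[OF hier] by simp
  qed (use H chain in \<open>auto simp: cluster_order_node\<close>)
qed

lemma tree_leaves_cluster_order:
  "tree_leaves (node ` H) (cluster_order node H) = (\<lambda>x. node {x}) ` V"
proof -
  have H: "{} \<notin> H" "\<And>C. C \<in> H \<Longrightarrow> C \<subseteq> V" "\<And>x. x \<in> V \<Longrightarrow> {x} \<in> H"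
    using hier unfolding hierarchy_def by blast+
  have minimal_iff: "(\<forall>D\<in>H. D \<subseteq> C \<longrightarrow> D = C) \<longleftrightarrow> (\<exists>x\<in>V. C = {x})" if C: "C \<in> H" for C
  proof
    assume minimal: "\<forall>D\<in>H. D \<subseteq> C \<longrightarrow> D = C"
    obtain x where "x \<in> C"
      using H(1) C by fastforce
    then show "\<exists>x\<in>V. C = {x}"
      using minimal H(2,3) C by blast
  next
    assume "\<exists>x\<in>V. C = {x}"
    then show "\<forall>D\<in>H. D \<subseteq> C \<longrightarrow> D = C"
      using H(1) subset_singletonD by fastforce
  qed
  have leaf_iff: "node C \<in> tree_leaves (node ` H) (cluster_order node H) \<longleftrightarrow> (\<forall>D\<in>H. D \<subseteq> C \<longrightarrow> D = C)"
    if "C \<in> H" for C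
    using that inj unfolding tree_leaves_def by (auto simp: cluster_order_node inj_on_eq_iff)
  show ?thesis
  proof (rule set_eqI)
    fix v
    show "v \<in> tree_leaves (node ` H) (cluster_order node H) \<longleftrightarrow> v \<in> (\<lambda>x. node {x}) ` V"
    proof
      assume v: "v \<in> tree_leaves (node ` H) (cluster_order node H)"
      then obtain C where C: "C \<in> H" "v = node C"
        unfolding tree_leaves_def by blast
      then obtain x where "x \<in> V" "C = {x}"
        using v leaf_iff[OF C(1)] minimal_iff[OF C(1)] by auto
      then show "v \<in> (\<lambda>x. node {x}) ` V"
        using C(2) by blast
    next
      assume "v \<in> (\<lambda>x. node {x}) ` V"
      then obtain x where x: "x \<in> V" "v = node {x}"
        by blast
      then show "v \<in> tree_leaves (node ` H) (cluster_order node H)"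
        using leaf_iff[OF H(3)] minimal_iff[OF H(3)] by auto
    qed
  qed
qed

lemma tree_children_cluster_order_card:
  assumes "C \<in> H" "\<forall>x. C \<noteq> {x}"
  shows "card (tree_children (node ` H) (cluster_order node H) (node C)) \<ge> 2"
proof -
  let ?children = "tree_children (node ` H) (cluster_order node H) (node C)"
  have child: "node M \<in> ?children"
    if "M \<in> H" "M \<subset> C" "\<And>W. W \<in> H \<Longrightarrow> M \<subseteq> W \<Longrightarrow> W \<subseteq> C \<Longrightarrow> W = M \<or> W = C" for M
    using that assms(1) inj unfolding tree_children_def
    by (auto simp: cluster_order_node dest: inj_onD)
  have "C \<noteq> {}"
    using hier assms(1) unfolding hierarchy_def by blast
  then obtain x where x: "x \<in> C" by blast
  obtain M1 where M1: "M1 \<in> H" "x \<in> M1" "M1 \<subset> C"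
    "\<And>W. W \<in> H \<Longrightarrow> M1 \<subseteq> W \<Longrightarrow> W \<subseteq> C \<Longrightarrow> W = M1 \<or> W = C"
    using hierarchy_maximal_subcluster[OF hier assms(1) x] assms(2) by blast
  obtain y where y: "y \<in> C" "y \<notin> M1"
    using M1(3) by blast
  obtain M2 where M2: "M2 \<in> H" "y \<in> M2" "M2 \<subset> C"
    "\<And>W. W \<in> H \<Longrightarrow> M2 \<subseteq> W \<Longrightarrow> W \<subseteq> C \<Longrightarrow> W = M2 \<or> W = C"
    using hierarchy_maximal_subcluster[OF hier assms(1) y(1)] assms(2) by blast
  have "node M1 \<noteq> node M2"
    using inj M1 M2 y by (metis inj_onD)
  moreover have "{node M1, node M2} \<subseteq> ?children"
    using child M1 M2 by blast
  moreover have "finite ?children"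
    unfolding tree_children_def using hierarchy_finite[OF hier] by simp
  ultimately show ?thesis
    by (metis card_2_iff card_mono)
qed

lemma lca_cluster_order:
  assumes "x \<in> V" "y \<in> V"
  shows "lca (node ` H) (cluster_order node H) (node {x}) (node {y}) = node (least_cluster H x y)"
proof (rule lca_eqI[OF rooted_tree_cluster_order])
  have H: "{x} \<in> H" "{y} \<in> H" "least_cluster H x y \<in> H"
    using hier assms least_cluster_in_hierarchy[OF hier assms] unfolding hierarchy_def by blast+
  have "cluster_order node H (node (least_cluster H x y)) w"
    if w: "w \<in> node ` H" "cluster_order node H (node {x}) w" "cluster_order node H (node {y}) w" for w
  proof -
    obtain C where C: "C \<in> H" "w = node C"
      using w(1) by blast
    moreover have "{x} \<subseteq> C" "{y} \<subseteq> C"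
      using w(2,3) C H by (simp_all add: cluster_order_node)
    ultimately show ?thesis
      using least_cluster_le[of C H x y] H by (simp add: cluster_order_node)
  qed
  then show "is_lca (node ` H) (cluster_order node H) (node {x}) (node {y}) (node (least_cluster H x y))"
    unfolding is_lca_def using H by (simp add: cluster_order_node least_cluster_mem)
qed

end

definition cluster_vertex :: "('a set \<Rightarrow> nat) \<Rightarrow> 'a set \<Rightarrow> 'a + nat" where
  "cluster_vertex g C = (if card C = 1 then Inl (the_elem C) else Inr (g C))"

lemma inj_on_cluster_vertex:
  assumes "inj_on g H"
  shows "inj_on (cluster_vertex g) H"
proof (rule inj_onI)
  fix C D assume "C \<in> H" "D \<in> H" "cluster_vertex g C = cluster_vertex g D"
  then show "C = D"
    using assms unfolding cluster_vertex_def
    by (auto split: if_splits simp: card_1_singleton_iff dest: inj_onD)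
qed

lemma hierarchy_phylo_tree:
  fixes V :: "'a set"
  assumes hier: "hierarchy V H"
  obtains VT :: "('a + nat) set" and le r node where
    "phylo_tree VT le r (Inl ` V)" "inj_on node H"
    "\<And>C D. C \<in> H \<Longrightarrow> D \<in> H \<Longrightarrow> le (node C) (node D) \<longleftrightarrow> C \<subseteq> D"
    "\<And>x y. x \<in> V \<Longrightarrow> y \<in> V \<Longrightarrow> lca VT le (Inl x) (Inl y) = node (least_cluster H x y)"
proof -
  obtain g :: "'a set \<Rightarrow> nat" where "inj_on g H"
    using finite_imp_inj_to_nat_seg[OF hierarchy_finite[OF hier]] by blast
  define node where "node = cluster_vertex g"
  have inj: "inj_on node H"
    unfolding node_def by (rule inj_on_cluster_vertex) fact
  have leaf: "node {x} = Inl x" for x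
    unfolding node_def cluster_vertex_def by simp
  have leaves: "tree_leaves (node ` H) (cluster_order node H) = Inl ` V"
    using tree_leaves_cluster_order[OF hier inj] by (simp add: leaf)
  have "phylo_tree (node ` H) (cluster_order node H) (node V) (Inl ` V)"
    unfolding phylo_tree_def
  proof (intro conjI ballI)
    show "rooted_tree (node ` H) (cluster_order node H) (node V)"
      by (rule rooted_tree_cluster_order[OF hier inj])
    show "tree_leaves (node ` H) (cluster_order node H) = Inl ` V"
      by (rule leaves)
    fix v assume "v \<in> node ` H - Inl ` V - {node V}"
    then obtain C where C: "C \<in> H" "v = node C" "v \<notin> Inl ` V"
      by blast
    have "C \<subseteq> V"
      using C(1) hier unfolding hierarchy_def by blast
    then have "C \<noteq> {x}" for x
      using C(2,3) leaf by auto
    then show "card (tree_children (node ` H) (cluster_order node H) v) \<ge> 2"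
      using tree_children_cluster_order_card[OF hier inj] C by blast
  qed
  moreover have "lca (node ` H) (cluster_order node H) (Inl x) (Inl y) = node (least_cluster H x y)"
    if "x \<in> V" "y \<in> V" for x y
    using lca_cluster_order[OF hier inj that] by (simp only: leaf)
  ultimately show thesis
    using that inj cluster_order_node[OF hier inj] by blast
qed

definition cluster_best_match :: "'a set set \<Rightarrow> ('a \<Rightarrow> 'c) \<Rightarrow> 'a set \<Rightarrow> 'a \<Rightarrow> 'a \<Rightarrow> bool" where
  "cluster_best_match H \<sigma> V x y \<longleftrightarrow> x \<in> V \<and> y \<in> V \<and> \<sigma> x \<noteq> \<sigma> y \<and>
     (\<forall>y'\<in>V. \<sigma> y' = \<sigma> y \<longrightarrow> least_cluster H x y \<subseteq> least_cluster H x y')"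

lemma is_RBMG_of_hierarchy:
  assumes hier: "hierarchy V H" and pc: "properly_colored E \<sigma>"
    and E: "{{x, y} | x y. cluster_best_match H \<sigma> V x y \<and> cluster_best_match H \<sigma> V y x} = E"
  shows "is_RBMG V E \<sigma>"
proof -
  obtain VT :: "('a + nat) set" and le r node where phylo: "phylo_tree VT le r (Inl ` V)"
    and "inj_on node H"
    and le: "\<And>C D. C \<in> H \<Longrightarrow> D \<in> H \<Longrightarrow> le (node C) (node D) \<longleftrightarrow> C \<subseteq> D"
    and lca: "\<And>x y. x \<in> V \<Longrightarrow> y \<in> V \<Longrightarrow> lca VT le (Inl x) (Inl y) = node (least_cluster H x y)"
    using hierarchy_phylo_tree[OF hier] by blast
  have "best_match VT le \<sigma> V x y \<longleftrightarrow> cluster_best_match H \<sigma> V x y" for x y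
  proof (cases "x \<in> V \<and> y \<in> V")
    case True
    then have "le (lca VT le (Inl x) (Inl y)) (lca VT le (Inl x) (Inl y')) \<longleftrightarrow>
        least_cluster H x y \<subseteq> least_cluster H x y'" if "y' \<in> V" for y'
      using lca le least_cluster_in_hierarchy[OF hier] that by simp
    then show ?thesis
      unfolding best_match_def cluster_best_match_def using True by simp
  next
    case False
    then show ?thesis
      unfolding best_match_def cluster_best_match_def by blast
  qed
  then have "rbm_edges VT le \<sigma> V = E"
    unfolding rbm_edges_def E[symmetric] by simp
  then show ?thesis
    unfolding is_RBMG_def using pc phylo by blast
qed

lemma orthology_graph_of_hierarchy:
  assumes hier: "hierarchy V H"
    and E: "\<And>x y. x \<in> V \<Longrightarrow> y \<in> V \<Longrightarrow> x \<noteq> y \<Longrightarrow> {x, y} \<in> E \<longleftrightarrow> least_cluster H x y \<in> T"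
  shows "orthology_graph V E"
proof -
  obtain VT :: "('a + nat) set" and le r node where phylo: "phylo_tree VT le r (Inl ` V)"
    and inj: "inj_on node H" and "\<And>C D. C \<in> H \<Longrightarrow> D \<in> H \<Longrightarrow> le (node C) (node D) \<longleftrightarrow> C \<subseteq> D"
    and lca: "\<And>x y. x \<in> V \<Longrightarrow> y \<in> V \<Longrightarrow> lca VT le (Inl x) (Inl y) = node (least_cluster H x y)"
    using hierarchy_phylo_tree[OF hier] by blast
  define t where "t v \<longleftrightarrow> v \<in> node ` (T \<inter> H)" for v
  have t: "t (lca VT le (Inl x) (Inl y)) \<longleftrightarrow> least_cluster H x y \<in> T" if "x \<in> V" "y \<in> V" for x y
    using inj_on_image_mem_iff[OF inj least_cluster_in_hierarchy[OF hier that], of "T \<inter> H"]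
      least_cluster_in_hierarchy[OF hier that]
    unfolding t_def lca[OF that] by simp
  show ?thesis
    unfolding orthology_graph_def
    by (intro exI[of _ VT] exI[of _ le] exI[of _ r] exI[of _ t] conjI phylo ballI impI) (simp add: E t)
qed

section \<open>Two-colored bicluster graphs\<close>

lemma simple_graph_edgeD:
  "simple_graph V E \<Longrightarrow> {x, y} \<in> E \<Longrightarrow> x \<in> V \<and> y \<in> V \<and> x \<noteq> y"
  unfolding simple_graph_def by (metis doubleton_eq_iff)

lemma simple_graph_edgeE:
  assumes "simple_graph V E" "e \<in> E"
  obtains x y where "e = {x, y}" "x \<noteq> y" "x \<in> V" "y \<in> V"
  using assms unfolding simple_graph_def by blast

lemma properly_colored_edgeD: "properly_colored E \<sigma> \<Longrightarrow> {x, y} \<in> E \<Longrightarrow> \<sigma> x \<noteq> \<sigma> y"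
  unfolding properly_colored_def by blast

lemma two_colors_eq:
  assumes "card (\<sigma> ` V) = 2" "x \<in> V" "y \<in> V" "z \<in> V" "\<sigma> x \<noteq> \<sigma> y" "\<sigma> y \<noteq> \<sigma> z"
  shows "\<sigma> x = \<sigma> z"
proof -
  obtain a b where "\<sigma> ` V = {a, b}"
    using assms(1) card_2_iff by metis
  then have "\<sigma> x \<in> {a, b}" "\<sigma> y \<in> {a, b}" "\<sigma> z \<in> {a, b}"
    using assms(2-4) by blast+
  then show ?thesis
    using assms(5,6) by auto
qed

lemma two_colors_subset_eq:
  assumes "card (\<sigma> ` V) = 2" "A \<subseteq> V" "x \<in> A" "y \<in> A" "\<sigma> x \<noteq> \<sigma> y"
  shows "\<sigma> ` A = \<sigma> ` V"
proof -
  have "finite (\<sigma> ` V)"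
    using assms(1) by (intro card_ge_0_finite) simp
  moreover have "{\<sigma> x, \<sigma> y} \<subseteq> \<sigma> ` V"
    using assms(2-4) by blast
  moreover have "card {\<sigma> x, \<sigma> y} = card (\<sigma> ` V)"
    using assms(1,5) by simp
  ultimately have "{\<sigma> x, \<sigma> y} = \<sigma> ` V"
    by (intro card_subset_eq)
  moreover have "{\<sigma> x, \<sigma> y} \<subseteq> \<sigma> ` A" "\<sigma> ` A \<subseteq> \<sigma> ` V"
    using assms(2-4) by auto
  ultimately show ?thesis
    by (metis subset_antisym)
qed

lemma connected_component_self: "x \<in> V \<Longrightarrow> x \<in> connected_component V E x"
  unfolding connected_component_def by simp

lemma connected_component_subset: "connected_component V E x \<subseteq> V"
  unfolding connected_component_def by auto

lemma connected_component_eq: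
  assumes "y \<in> connected_component V E x"
  shows "connected_component V E y = connected_component V E x"
proof -
  have "symp (\<lambda>u v. {u, v} \<in> E)"
    by (simp add: symp_def insert_commute)
  then have "symp (\<lambda>u v. {u, v} \<in> E)\<^sup>*\<^sup>*"
    by (rule symp_rtranclp)
  moreover have xy: "(\<lambda>u v. {u, v} \<in> E)\<^sup>*\<^sup>* x y"
    using assms unfolding connected_component_def by simp
  ultimately have yx: "(\<lambda>u v. {u, v} \<in> E)\<^sup>*\<^sup>* y x"
    by (rule sympD)
  show ?thesis
    unfolding connected_component_def
    using rtranclp_trans[OF xy] rtranclp_trans[OF yx] by blast
qed

lemma connected_component_eq_or_disjoint:
  "connected_component V E x = connected_component V E y \<or>
   connected_component V E x \<inter> connected_component V E y = {}"
proof -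
  have "connected_component V E x = connected_component V E y"
    if "z \<in> connected_component V E x" "z \<in> connected_component V E y" for z
    using connected_component_eq[OF that(1)] connected_component_eq[OF that(2)] by simp
  then show ?thesis
    by blast
qed

lemma connected_component_edge:
  "simple_graph V E \<Longrightarrow> {x, y} \<in> E \<Longrightarrow> y \<in> connected_component V E x"
  unfolding connected_component_def using simple_graph_edgeD by fastforce

lemma connected_component_eq_singleton_iff:
  assumes "simple_graph V E" "x \<in> V"
  shows "connected_component V E x = {x} \<longleftrightarrow> (\<forall>z. {x, z} \<notin> E)"
proof
  assume "connected_component V E x = {x}"
  then show "\<forall>z. {x, z} \<notin> E"
    using connected_component_edge[OF assms(1)] simple_graph_edgeD[OF assms(1)] by fastforce
next
  assume isolated: "\<forall>z. {x, z} \<notin> E"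
  have "y = x" if "(\<lambda>u v. {u, v} \<in> E)\<^sup>*\<^sup>* x y" for y
    using that by (cases rule: converse_rtranclpE) (use isolated in auto)
  then show "connected_component V E x = {x}"
    unfolding connected_component_def using assms(2) by auto
qed

lemma Union_connected_components: "\<Union>(connected_component V E ` V) = V"
proof
  show "\<Union>(connected_component V E ` V) \<subseteq> V"
    using connected_component_subset by (rule UN_least)
  show "V \<subseteq> \<Union>(connected_component V E ` V)"
    using connected_component_self by fast
qed

lemma pairwise_disjnt_connected_components: "pairwise disjnt (connected_component V E ` A)"
proof (rule pairwiseI)
  fix C D assume "C \<in> connected_component V E ` A" "D \<in> connected_component V E ` A" "C \<noteq> D"
  then obtain u v where "C = connected_component V E u" "D = connected_component V E v"
    by blast
  then show "disjnt C D"
    using connected_component_eq_or_disjoint[of V E u v] \<open>C \<noteq> D\<close> by (simp add: disjnt_def)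
qed

text \<open>In a properly two-colored graph this says that there is no induced path on four vertices.\<close>

definition P4_closed :: "'a set set \<Rightarrow> bool" where
  "P4_closed E \<longleftrightarrow> (\<forall>x y x' y'. {x, y} \<in> E \<longrightarrow> {y, x'} \<in> E \<longrightarrow> {x', y'} \<in> E \<longrightarrow> {x, y'} \<in> E)"

lemma P4_closed_reachable:
  assumes sg: "simple_graph V E" and two: "card (\<sigma> ` V) = 2" and pc: "properly_colored E \<sigma>"
    and P4: "P4_closed E" and x: "x \<in> V" and path: "(\<lambda>u v. {u, v} \<in> E)\<^sup>*\<^sup>* x z"
  shows "z = x \<or> {x, z} \<in> E \<or> (\<sigma> z = \<sigma> x \<and> (\<forall>w. {z, w} \<in> E \<longleftrightarrow> {x, w} \<in> E))"
  using path
proof (induction rule: rtranclp_induct)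
  case base
  then show ?case by simp
next
  case (step z z')
  have zz': "z \<in> V" "z' \<in> V" "\<sigma> z \<noteq> \<sigma> z'"
    using simple_graph_edgeD[OF sg step.hyps(2)] properly_colored_edgeD[OF pc step.hyps(2)] by auto
  from step.IH consider "z = x" | "{x, z} \<in> E" | "\<sigma> z = \<sigma> x" "\<forall>w. {z, w} \<in> E \<longleftrightarrow> {x, w} \<in> E"
    by blast
  then show ?case
  proof cases
    case 2
    have "\<sigma> z' = \<sigma> x"
      using two_colors_eq[OF two zz'(2,1) x] zz'(3) properly_colored_edgeD[OF pc 2] by metis
    moreover have "{z', w} \<in> E \<longleftrightarrow> {x, w} \<in> E" for w
      using P4[unfolded P4_closed_def, rule_format, of x z z' w]
        P4[unfolded P4_closed_def, rule_format, of z' z x w] 2 step.hyps(2)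
      by (auto simp: insert_commute)
    ultimately show ?thesis
      by blast
  qed (use step.hyps(2) in auto)
qed

lemma P4_closed_bicluster:
  assumes sg: "simple_graph V E" and two: "card (\<sigma> ` V) = 2" and pc: "properly_colored E \<sigma>"
    and P4: "P4_closed E"
  shows "bicluster_graph V E"
  unfolding bicluster_graph_def
proof
  fix x assume x: "x \<in> V"
  define K where "K = connected_component V E x"
  have reach: "z = x \<or> {x, z} \<in> E \<or> (\<sigma> z = \<sigma> x \<and> (\<forall>w. {z, w} \<in> E \<longleftrightarrow> {x, w} \<in> E))"
    if "z \<in> K" for z
    using P4_closed_reachable[OF sg two pc P4 x] that unfolding K_def connected_component_def by blast
  show "biclique K {e \<in> E. e \<subseteq> K}"
  proof (cases "\<forall>z. {x, z} \<notin> E")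
    case True
    then have "K = {x}"
      unfolding K_def using connected_component_eq_singleton_iff[OF sg x] by blast
    moreover have "\<not> e \<subseteq> {x}" if "e \<in> E" for e
      using simple_graph_edgeE[OF sg that] by (metis insert_subset singletonD)
    ultimately show ?thesis
      unfolding biclique_def by auto
  next
    case False
    then obtain z where z: "{x, z} \<in> E"
      by blast
    define A where "A = {w \<in> K. \<sigma> w = \<sigma> x}"
    define B where "B = {w \<in> K. \<sigma> w \<noteq> \<sigma> x}"
    have "x \<in> A" "z \<in> B"
      using connected_component_self[OF x] connected_component_edge[OF sg z]
        properly_colored_edgeD[OF pc z] unfolding A_def B_def K_def by auto
    moreover have "{e \<in> E. e \<subseteq> K} = {{a, b} | a b. a \<in> A \<and> b \<in> B}"
    proof (intro subset_antisym subsetI)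
      fix e assume e: "e \<in> {e \<in> E. e \<subseteq> K}"
      then have "e \<in> E"
        by simp
      then obtain u v where uv: "e = {u, v}" "u \<noteq> v" "u \<in> V" "v \<in> V"
        by (rule simple_graph_edgeE[OF sg])
      then have "\<sigma> u \<noteq> \<sigma> v"
        using properly_colored_edgeD[OF pc] e by blast
      then have "\<sigma> u = \<sigma> x \<and> \<sigma> v \<noteq> \<sigma> x \<or> \<sigma> v = \<sigma> x \<and> \<sigma> u \<noteq> \<sigma> x"
        using two_colors_eq[OF two uv(3) x uv(4)] by metis
      then show "e \<in> {{a, b} | a b. a \<in> A \<and> b \<in> B}"
        using e uv unfolding A_def B_def by (auto simp: insert_commute)
    next
      fix e assume "e \<in> {{a, b} | a b. a \<in> A \<and> b \<in> B}"
      then obtain a b where ab: "e = {a, b}" "a \<in> A" "b \<in> B"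
        by blast
      have "{x, b} \<in> E"
        using reach[of b] ab(3) unfolding B_def by auto
      moreover have "a = x \<or> (\<forall>w. {a, w} \<in> E \<longleftrightarrow> {x, w} \<in> E)"
        using reach[of a] ab(2) properly_colored_edgeD[OF pc, of x a] unfolding A_def by auto
      ultimately have "{a, b} \<in> E"
        by blast
      then show "e \<in> {e \<in> E. e \<subseteq> K}"
        using ab unfolding A_def B_def by auto
    qed
    moreover have "A \<inter> B = {}" "A \<union> B = K"
      unfolding A_def B_def by auto
    ultimately show ?thesis
      unfolding biclique_def by blast
  qed
qed

lemma bicluster_edge_iff:
  assumes two: "card (\<sigma> ` V) = 2" and pc: "properly_colored E \<sigma>" and sg: "simple_graph V E"
    and bc: "bicluster_graph V E" and x: "x \<in> V" and y: "y \<in> V"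
  shows "{x, y} \<in> E \<longleftrightarrow> y \<in> connected_component V E x \<and> \<sigma> x \<noteq> \<sigma> y"
proof
  assume "{x, y} \<in> E"
  then show "y \<in> connected_component V E x \<and> \<sigma> x \<noteq> \<sigma> y"
    using connected_component_edge[OF sg] properly_colored_edgeD[OF pc] by blast
next
  assume y_comp: "y \<in> connected_component V E x \<and> \<sigma> x \<noteq> \<sigma> y"
  define K where "K = connected_component V E x"
  have xy: "x \<in> K" "y \<in> K" "x \<noteq> y"
    using y_comp connected_component_self[OF x] unfolding K_def by auto
  have "biclique K {e \<in> E. e \<subseteq> K}"
    using bc x unfolding bicluster_graph_def K_def by blast
  moreover have "card K \<noteq> 1"
  proof
    assume "card K = 1"
    then obtain c where "K = {c}"
      by (rule card_1_singletonE)
    with xy show False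
      by simp
  qed
  ultimately have "\<exists>A B. A \<noteq> {} \<and> B \<noteq> {} \<and> A \<inter> B = {} \<and> A \<union> B = K \<and>
      {e \<in> E. e \<subseteq> K} = {{a, b} | a b. a \<in> A \<and> b \<in> B}"
    unfolding biclique_def by simp
  then obtain A B where AB: "A \<noteq> {}" "B \<noteq> {}" "A \<union> B = K"
    and edges: "{e \<in> E. e \<subseteq> K} = {{a, b} | a b. a \<in> A \<and> b \<in> B}"
    by (elim exE conjE)
  have join: "{a, b} \<in> E" "\<sigma> a \<noteq> \<sigma> b" if "a \<in> A" "b \<in> B" for a b
  proof -
    have "{a, b} \<in> {{a, b} | a b. a \<in> A \<and> b \<in> B}"
      using that by blast
    then have "{a, b} \<in> {e \<in> E. e \<subseteq> K}"
      unfolding edges .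
    then show "{a, b} \<in> E" "\<sigma> a \<noteq> \<sigma> b"
      using properly_colored_edgeD[OF pc] by auto
  qed
  have "K \<subseteq> V"
    unfolding K_def by (rule connected_component_subset)
  then have AV: "A \<subseteq> V" "B \<subseteq> V"
    using AB(3) by auto
  obtain a0 b0 where a0: "a0 \<in> A" and b0: "b0 \<in> B"
    using AB by blast
  have "\<not> (x \<in> A \<and> y \<in> A)"
  proof
    assume "x \<in> A \<and> y \<in> A"
    then have "\<sigma> x = \<sigma> y"
      using two_colors_eq[OF two, of x b0 y] join(2)[OF _ b0] b0 AV by (metis subsetD)
    then show False
      using y_comp by blast
  qed
  moreover have "\<not> (x \<in> B \<and> y \<in> B)"
  proof
    assume "x \<in> B \<and> y \<in> B"
    then have "\<sigma> x = \<sigma> y"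
      using two_colors_eq[OF two, of x a0 y] join(2)[OF a0] a0 AV by (metis subsetD)
    then show False
      using y_comp by blast
  qed
  moreover have "x \<in> A \<union> B" "y \<in> A \<union> B"
    using xy AB(3) by auto
  ultimately have "x \<in> A \<and> y \<in> B \<or> y \<in> A \<and> x \<in> B"
    by blast
  then show "{x, y} \<in> E"
    using join(1) by (metis insert_commute)
qed

section \<open>Reciprocal best match graphs on two colors\<close>

lemma rbm_edges_iff:
  "{x, y} \<in> rbm_edges VT le \<sigma> V \<longleftrightarrow> best_match VT le \<sigma> V x y \<and> best_match VT le \<sigma> V y x"
  unfolding rbm_edges_def by (auto simp: doubleton_eq_iff)

context
  fixes VT :: "('a + nat) set" and le r and V :: "'a set" and \<sigma> :: "'a \<Rightarrow> 'c"
  assumes tree: "rooted_tree VT le r" and leaves: "\<And>x. x \<in> V \<Longrightarrow> Inl x \<in> VT"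
begin

lemma best_match_lca_eq:
  assumes "best_match VT le \<sigma> V x y" "best_match VT le \<sigma> V x y'" "\<sigma> y' = \<sigma> y"
  shows "lca VT le (Inl x) (Inl y) = lca VT le (Inl x) (Inl y')"
  using assms leaves lca_in_tree[OF tree] rooted_tree_antisym[OF tree]
  unfolding best_match_def by metis

lemma best_match_if_lca_below:
  assumes bm: "best_match VT le \<sigma> V x y" and y': "y' \<in> V" "\<sigma> y' = \<sigma> y"
    and below: "le (lca VT le (Inl x) (Inl y')) (lca VT le (Inl x) (Inl y))"
  shows "best_match VT le \<sigma> V x y'"
  unfolding best_match_def
proof (intro conjI ballI impI)
  show "x \<in> V" "y' \<in> V" "\<sigma> x \<noteq> \<sigma> y'"
    using bm y' unfolding best_match_def by auto
  fix y'' assume "y'' \<in> V" "\<sigma> y'' = \<sigma> y'"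
  then have "le (lca VT le (Inl x) (Inl y)) (lca VT le (Inl x) (Inl y''))"
    using bm y' unfolding best_match_def by auto
  then show "le (lca VT le (Inl x) (Inl y')) (lca VT le (Inl x) (Inl y''))"
    using rooted_tree_trans[OF tree _ _ _ below] lca_in_tree[OF tree] leaves bm \<open>y'' \<in> V\<close> y'
    unfolding best_match_def by blast
qed

lemma rbm_edges_P4_closed:
  assumes two: "card (\<sigma> ` V) = 2"
  shows "P4_closed (rbm_edges VT le \<sigma> V)"
  unfolding P4_closed_def
proof (intro allI impI)
  fix x y x' y'
  assume "{x, y} \<in> rbm_edges VT le \<sigma> V" "{y, x'} \<in> rbm_edges VT le \<sigma> V" "{x', y'} \<in> rbm_edges VT le \<sigma> V"
  then have bm: "best_match VT le \<sigma> V x y" "best_match VT le \<sigma> V y x" "best_match VT le \<sigma> V y x'"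
    "best_match VT le \<sigma> V x' y" "best_match VT le \<sigma> V x' y'" "best_match VT le \<sigma> V y' x'"
    unfolding rbm_edges_iff by blast+
  then have V: "x \<in> V" "y \<in> V" "x' \<in> V" "y' \<in> V" and col: "\<sigma> x \<noteq> \<sigma> y" "\<sigma> y \<noteq> \<sigma> x'" "\<sigma> x' \<noteq> \<sigma> y'"
    unfolding best_match_def by blast+
  have same_col: "\<sigma> x' = \<sigma> x" "\<sigma> y' = \<sigma> y"
    using two_colors_eq[OF two V(1-3)] two_colors_eq[OF two V(2-4)] col by auto
  define l where "l p q = lca VT le (Inl p) (Inl q)" for p q
  have l_commute: "l p q = l q p" for p q
    unfolding l_def by (rule lca_commute)
  define u where "u = l x y"
  have "l y x = l y x'" "l x' y = l x' y'"
    unfolding l_def using best_match_lca_eq bm same_col by metis+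
  then have u: "l y' x' = u" "l y' x = l x y'" "l y x' = u"
    unfolding u_def using l_commute by metis+
  have "u \<in> VT" "le (Inl x) u" "le (Inl y') u"
    using u(1,3) leaves V lca_in_tree[OF tree] lca_upper1[OF tree] lca_upper2[OF tree]
    unfolding u_def l_def by metis+
  then have below: "le (l x y') u"
    unfolding l_def using lca_least[OF tree] leaves V by blast
  have "best_match VT le \<sigma> V x y'"
    using best_match_if_lca_below[OF bm(1) V(4) same_col(2)] below unfolding u_def l_def .
  moreover have "best_match VT le \<sigma> V y' x"
    using best_match_if_lca_below[OF bm(6) V(1) same_col(1)[symmetric]] below u
    unfolding l_def by simp
  ultimately show "{x, y'} \<in> rbm_edges VT le \<sigma> V"
    unfolding rbm_edges_iff by blast
qed

lemma rbm_edges_nonempty: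
  assumes "x0 \<in> V" "y0 \<in> V" "\<sigma> x0 \<noteq> \<sigma> y0"
  shows "rbm_edges VT le \<sigma> V \<noteq> {}"
proof -
  define S where "S = {lca VT le (Inl x) (Inl y) | x y. x \<in> V \<and> y \<in> V \<and> \<sigma> x \<noteq> \<sigma> y}"
  have "S \<subseteq> VT"
    unfolding S_def using lca_in_tree[OF tree] leaves by blast
  moreover have "lca VT le (Inl x0) (Inl y0) \<in> S"
    unfolding S_def using assms by blast
  ultimately obtain m where "m \<in> S" and minimal: "\<And>s. s \<in> S \<Longrightarrow> le s m \<Longrightarrow> s = m"
    using rooted_tree_has_minimal[OF tree] by metis
  then obtain x y where xy: "x \<in> V" "y \<in> V" "\<sigma> x \<noteq> \<sigma> y" "m = lca VT le (Inl x) (Inl y)"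
    unfolding S_def by blast
  have bm: "best_match VT le \<sigma> V p q"
    if pq: "p \<in> V" "q \<in> V" "\<sigma> p \<noteq> \<sigma> q" "lca VT le (Inl p) (Inl q) = m" for p q
    unfolding best_match_def
  proof (intro conjI ballI impI)
    fix q' assume q': "q' \<in> V" "\<sigma> q' = \<sigma> q"
    define l where "l = lca VT le (Inl p) (Inl q')"
    have "\<sigma> p \<noteq> \<sigma> q'"
      using pq q' by simp
    then have "l \<in> S"
      unfolding S_def l_def using pq q' by blast
    have "le m l \<or> le l m"
      using rooted_tree_ancestors_chain[OF tree] lca_in_tree[OF tree] lca_upper1[OF tree] leaves pq q'
      unfolding l_def by metis
    then show "le (lca VT le (Inl p) (Inl q)) l"
    proof
      assume "le l m"
      then have "l = m"
        using minimal \<open>l \<in> S\<close> by blast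
      then show ?thesis
        using pq(4) rooted_tree_refl[OF tree] \<open>l \<in> S\<close> \<open>S \<subseteq> VT\<close> by auto
    qed (use pq(4) in simp)
  qed (use pq in auto)
  have "best_match VT le \<sigma> V x y" "best_match VT le \<sigma> V y x"
    using bm xy lca_commute by metis+
  then show ?thesis
    unfolding rbm_edges_def by blast
qed

end

lemma is_RBMG_two_colors_bicluster:
  assumes sg: "simple_graph V E" and two: "card (\<sigma> ` V) = 2" and rbmg: "is_RBMG V E \<sigma>"
  shows "properly_colored E \<sigma> \<and> bicluster_graph V E \<and> E \<noteq> {}"
proof -
  obtain VT le r where phylo: "phylo_tree VT le r (Inl ` V)" and E: "rbm_edges VT le \<sigma> V = E"
    and pc: "properly_colored E \<sigma>"
    using rbmg unfolding is_RBMG_def by blast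
  have tree: "rooted_tree VT le r"
    using phylo unfolding phylo_tree_def by blast
  have leaves: "Inl x \<in> VT" if "x \<in> V" for x
    using phylo that unfolding phylo_tree_def tree_leaves_def by blast
  obtain a b where "\<sigma> ` V = {a, b}" "a \<noteq> b"
    using two card_2_iff by metis
  then obtain x0 y0 where "x0 \<in> V" "y0 \<in> V" "\<sigma> x0 \<noteq> \<sigma> y0"
    by (metis imageE insertI1 insertI2)
  then have "E \<noteq> {}"
    using rbm_edges_nonempty[OF tree leaves] E by blast
  moreover have "bicluster_graph V E"
    using P4_closed_bicluster[OF sg two pc] rbm_edges_P4_closed[OF tree leaves two] E by simp
  ultimately show ?thesis
    using pc by blast
qed

section \<open>Hierarchically colored cographs\<close>

lemma doubleton_in_join_iff:
  "{x, y} \<in> {{a, b} | a b. a \<in> A \<and> b \<in> B} \<longleftrightarrow> x \<in> A \<and> y \<in> B \<or> x \<in> B \<and> y \<in> A"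
  by (auto simp: doubleton_eq_iff)

lemma P4_closed_join:
  assumes "A \<inter> B = {}"
  shows "P4_closed {{a, b} | a b. a \<in> A \<and> b \<in> B}"
  unfolding P4_closed_def doubleton_in_join_iff using assms by blast

lemma P4_closed_Un:
  assumes "simple_graph V1 E1" "simple_graph V2 E2" "V1 \<inter> V2 = {}" "P4_closed E1" "P4_closed E2"
  shows "P4_closed (E1 \<union> E2)"
  unfolding P4_closed_def
proof (intro allI impI)
  have apart: "{a, b} \<in> E1 \<Longrightarrow> {c, d} \<in> E2 \<Longrightarrow> {a, b} \<inter> {c, d} = {}" for a b c d
    using simple_graph_edgeD[OF assms(1)] simple_graph_edgeD[OF assms(2)] assms(3) by blast
  fix x y x' y'
  assume "{x, y} \<in> E1 \<union> E2" "{y, x'} \<in> E1 \<union> E2" "{x', y'} \<in> E1 \<union> E2"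
  then consider "{x, y} \<in> E1" "{y, x'} \<in> E1" "{x', y'} \<in> E1"
    | "{x, y} \<in> E2" "{y, x'} \<in> E2" "{x', y'} \<in> E2"
    using apart[of x y y x'] apart[of y x' x y] apart[of y x' x' y'] apart[of x' y' y x'] by auto
  then show "{x, y'} \<in> E1 \<union> E2"
    using assms(4,5) unfolding P4_closed_def by cases blast+
qed

lemma simple_graph_Un:
  assumes "simple_graph V1 E1" "simple_graph V2 E2"
  shows "simple_graph (V1 \<union> V2) (E1 \<union> E2)"
  unfolding simple_graph_def
proof (intro conjI ballI)
  show "finite (V1 \<union> V2)"
    using assms unfolding simple_graph_def by simp
  fix e assume "e \<in> E1 \<union> E2"
  then obtain x y where "e = {x, y}" "x \<noteq> y" "x \<in> V1 \<union> V2" "y \<in> V1 \<union> V2"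
    using simple_graph_edgeE[OF assms(1)] simple_graph_edgeE[OF assms(2)] by (metis UnE UnI1 UnI2)
  then show "\<exists>x y. e = {x, y} \<and> x \<noteq> y \<and> x \<in> V1 \<union> V2 \<and> y \<in> V1 \<union> V2"
    by blast
qed

lemma simple_graph_join:
  assumes "finite A" "finite B" "A \<inter> B = {}"
  shows "simple_graph (A \<union> B) {{a, b} | a b. a \<in> A \<and> b \<in> B}"
  unfolding simple_graph_def
proof (intro conjI ballI)
  fix e assume "e \<in> {{a, b} | a b. a \<in> A \<and> b \<in> B}"
  then obtain a b where "e = {a, b}" "a \<in> A" "b \<in> B"
    by blast
  moreover have "a \<noteq> b"
    using calculation(2,3) assms(3) by blast
  ultimately show "\<exists>x y. e = {x, y} \<and> x \<noteq> y \<and> x \<in> A \<union> B \<and> y \<in> A \<union> B"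
    by blast
qed (use assms in simp)

lemma edgeless_if_one_color:
  assumes "simple_graph V E" "properly_colored E \<sigma>" "card (\<sigma> ` V) \<le> 1"
  shows "E = {}"
proof (rule ccontr)
  assume "E \<noteq> {}"
  then obtain x y where "{x, y} \<in> E" "x \<in> V" "y \<in> V"
    using simple_graph_edgeE[OF assms(1)] by (metis ex_in_conv)
  moreover have "finite (\<sigma> ` V)"
    using assms(1) unfolding simple_graph_def by simp
  ultimately have "card {\<sigma> x, \<sigma> y} \<le> card (\<sigma> ` V)"
    by (intro card_mono) auto
  moreover have "\<sigma> x \<noteq> \<sigma> y"
    using properly_colored_edgeD[OF assms(2)] \<open>{x, y} \<in> E\<close> .
  ultimately show False
    using assms(3) by simp
qed

lemma hc_cograph_nonempty: "hc_cograph \<sigma> V E \<Longrightarrow> V \<noteq> {}"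
  by (induction rule: hc_cograph.induct) auto

lemma hc_cograph_simple_graph: "hc_cograph \<sigma> V E \<Longrightarrow> simple_graph V E"
proof (induction rule: hc_cograph.induct)
  case (K2 V1 E1 V2 E2)
  have "finite V1" "finite V2"
    using K2.IH unfolding simple_graph_def by simp_all
  then have "simple_graph (V1 \<union> V2) {{a, b} | a b. a \<in> V1 \<and> b \<in> V2}"
    using simple_graph_join K2.hyps(3) by blast
  from simple_graph_Un[OF simple_graph_Un[OF K2.IH] this] show ?case
    by simp
next
  case (K3 V1 E1 V2 E2)
  show ?case
    using simple_graph_Un[OF K3.IH] .
qed (simp add: simple_graph_def)

lemma hc_cograph_properly_colored: "hc_cograph \<sigma> V E \<Longrightarrow> properly_colored E \<sigma>"
proof (induction rule: hc_cograph.induct)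
  case (K2 V1 E1 V2 E2)
  then show ?case
    unfolding properly_colored_def doubleton_in_join_iff Un_iff by blast
next
  case (K3 V1 E1 V2 E2)
  then show ?case
    unfolding properly_colored_def Un_iff by simp
qed (simp add: properly_colored_def)

lemma hc_cograph_edges_nonempty: "hc_cograph \<sigma> V E \<Longrightarrow> card (\<sigma> ` V) \<ge> 2 \<Longrightarrow> E \<noteq> {}"
proof (induction rule: hc_cograph.induct)
  case (K2 V1 E1 V2 E2)
  obtain a b where "a \<in> V1" "b \<in> V2"
    using hc_cograph_nonempty[OF K2.hyps(1)] hc_cograph_nonempty[OF K2.hyps(2)] by blast
  then have "{a, b} \<in> {{a, b} | a b. a \<in> V1 \<and> b \<in> V2}"
    by blast
  then show ?case
    by blast
next
  case (K3 V1 E1 V2 E2)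
  then have "\<sigma> ` (V1 \<union> V2) = \<sigma> ` V1 \<or> \<sigma> ` (V1 \<union> V2) = \<sigma> ` V2"
    by auto
  then show ?case
    using K3 by auto
qed simp

lemma hc_cograph_P4_closed: "hc_cograph \<sigma> V E \<Longrightarrow> card (\<sigma> ` V) \<le> 2 \<Longrightarrow> P4_closed E"
proof (induction rule: hc_cograph.induct)
  case (K1 x)
  then show ?case
    unfolding P4_closed_def by simp
next
  case (K2 V1 E1 V2 E2)
  have fin: "finite (\<sigma> ` V1)" "finite (\<sigma> ` V2)"
    using hc_cograph_simple_graph[OF K2.hyps(1)] hc_cograph_simple_graph[OF K2.hyps(2)]
    unfolding simple_graph_def by simp_all
  have "card (\<sigma> ` V1) + card (\<sigma> ` V2) \<le> 2"
    using K2.prems K2.hyps(4) card_Un_disjoint[OF fin] by (simp add: image_Un)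
  moreover have "card (\<sigma> ` V1) \<ge> 1" "card (\<sigma> ` V2) \<ge> 1"
    using hc_cograph_nonempty[OF K2.hyps(1)] hc_cograph_nonempty[OF K2.hyps(2)] fin
    by (simp_all add: Suc_le_eq card_gt_0_iff)
  ultimately have "E1 = {}" "E2 = {}"
    using edgeless_if_one_color hc_cograph_simple_graph hc_cograph_properly_colored K2.hyps(1,2)
    by (metis add_le_cancel_left add_le_cancel_right le_trans one_add_one)+
  then show ?case
    using P4_closed_join[OF K2.hyps(3)] by simp
next
  case (K3 V1 E1 V2 E2)
  have "finite (\<sigma> ` (V1 \<union> V2))"
    using hc_cograph_simple_graph[OF K3.hyps(1)] hc_cograph_simple_graph[OF K3.hyps(2)]
    unfolding simple_graph_def by simp
  then have "card (\<sigma> ` V1) \<le> 2" "card (\<sigma> ` V2) \<le> 2"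
    using K3.prems card_mono[of "\<sigma> ` (V1 \<union> V2)"] by (metis image_mono le_trans sup_ge1 sup_ge2)+
  then show ?case
    using P4_closed_Un[OF hc_cograph_simple_graph[OF K3.hyps(1)] hc_cograph_simple_graph[OF K3.hyps(2)]
        K3.hyps(3)] K3.IH by blast
qed

lemma hc_cograph_two_colors_bicluster:
  assumes "hc_cograph \<sigma> V E" "card (\<sigma> ` V) = 2"
  shows "properly_colored E \<sigma> \<and> bicluster_graph V E \<and> E \<noteq> {}"
proof -
  have sg: "simple_graph V E" and pc: "properly_colored E \<sigma>"
    using hc_cograph_simple_graph[OF assms(1)] hc_cograph_properly_colored[OF assms(1)] .
  have "P4_closed E" "E \<noteq> {}"
    using hc_cograph_P4_closed[OF assms(1)] hc_cograph_edges_nonempty[OF assms(1)] assms(2) by simp_all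
  then show ?thesis
    using P4_closed_bicluster[OF sg assms(2) pc] pc by blast
qed

lemma hc_cograph_monochromatic:
  assumes "finite S" "S \<noteq> {}" "\<And>x. x \<in> S \<Longrightarrow> \<sigma> x = c"
  shows "hc_cograph \<sigma> S {}"
  using assms
proof (induction S rule: finite_ne_induct)
  case (singleton x)
  show ?case
    by (rule K1)
next
  case (insert x S)
  have "\<sigma> ` {x} = {c}" "\<sigma> ` S = {c}"
    using insert by auto
  then have "hc_cograph \<sigma> ({x} \<union> S) ({} \<union> {})"
    using K3[OF K1 insert.IH] insert by simp
  then show ?case
    by simp
qed

lemma hc_cograph_complete_bipartite:
  assumes "finite A" "A \<noteq> {}" "\<And>a. a \<in> A \<Longrightarrow> \<sigma> a = c"
    and "finite B" "B \<noteq> {}" "\<And>b. b \<in> B \<Longrightarrow> \<sigma> b = d"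
    and "A \<inter> B = {}" "c \<noteq> d"
  shows "hc_cograph \<sigma> (A \<union> B) {{a, b} | a b. a \<in> A \<and> b \<in> B}"
proof -
  have "\<sigma> ` A \<inter> \<sigma> ` B = {}"
    using assms(3,6,8) by auto
  then show ?thesis
    using K2[OF hc_cograph_monochromatic[OF assms(1-3)] hc_cograph_monochromatic[OF assms(4-6)] assms(7)]
    by simp
qed

lemma hc_cograph_Union:
  assumes "hc_cograph \<sigma> V0 E0" "finite \<C>" "pairwise disjnt \<C>"
    and "\<And>C. C \<in> \<C> \<Longrightarrow> hc_cograph \<sigma> C (F C)"
    and "\<And>C. C \<in> \<C> \<Longrightarrow> C \<inter> V0 = {}"
    and "\<And>C. C \<in> \<C> \<Longrightarrow> \<sigma> ` C \<subseteq> \<sigma> ` V0"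
  shows "hc_cograph \<sigma> (V0 \<union> \<Union>\<C>) (E0 \<union> \<Union>(F ` \<C>))"
  using assms(2-)
proof (induction \<C> rule: finite_induct)
  case empty
  then show ?case
    using assms(1) by simp
next
  case (insert C \<C>)
  have IH: "hc_cograph \<sigma> (V0 \<union> \<Union>\<C>) (E0 \<union> \<Union>(F ` \<C>))"
    using insert by (simp add: pairwise_insert)
  have "disjnt C D" if "D \<in> \<C>" for D
    using insert.prems(1) insert.hyps(2) that by (auto simp: pairwise_insert)
  then have "C \<inter> \<Union>\<C> = {}"
    by (auto simp: disjnt_def)
  then have "(V0 \<union> \<Union>\<C>) \<inter> C = {}"
    using insert.prems(3) by blast
  moreover have "\<sigma> ` (V0 \<union> \<Union>\<C>) \<inter> \<sigma> ` C = \<sigma> ` C"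
    using insert.prems(4) by blast
  ultimately have "hc_cograph \<sigma> ((V0 \<union> \<Union>\<C>) \<union> C) ((E0 \<union> \<Union>(F ` \<C>)) \<union> F C)"
    using K3[OF IH insert.prems(2)] by simp
  then show ?case
    by (simp add: ac_simps)
qed

locale two_colored_bicluster =
  fixes V :: "'a set" and E :: "'a set set" and \<sigma> :: "'a \<Rightarrow> 'c" and x0 y0 :: 'a
  assumes simple: "simple_graph V E" and two_colors: "card (\<sigma> ` V) = 2"
    and proper: "properly_colored E \<sigma>" and bicluster: "bicluster_graph V E"
    and edge0: "{x0, y0} \<in> E"
begin

abbreviation component :: "'a \<Rightarrow> 'a set" where
  "component \<equiv> connected_component V E"

lemma finite_V: "finite V"
  using simple unfolding simple_graph_def by blast

lemma edge_iff: "x \<in> V \<Longrightarrow> y \<in> V \<Longrightarrow> {x, y} \<in> E \<longleftrightarrow> y \<in> component x \<and> \<sigma> x \<noteq> \<sigma> y"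
  by (rule bicluster_edge_iff[OF two_colors proper simple bicluster])

lemma edge0_facts: "x0 \<in> V" "y0 \<in> V" "x0 \<noteq> y0" "y0 \<in> component x0" "\<sigma> x0 \<noteq> \<sigma> y0"
  using simple_graph_edgeD[OF simple edge0] edge_iff[of x0 y0] edge0 by simp_all

lemma component_other_color:
  assumes "x \<in> V" "component x \<noteq> {x}"
  obtains z where "z \<in> component x" "z \<in> V" "\<sigma> z \<noteq> \<sigma> x"
proof -
  obtain z where z: "{x, z} \<in> E"
    using connected_component_eq_singleton_iff[OF simple assms(1)] assms(2) by blast
  then have "z \<in> V"
    using simple_graph_edgeD[OF simple] by blast
  with z show thesis
    using that edge_iff[OF assms(1)] by fastforce
qed

text \<open>Isolated vertices of the color of \<open>x0\<close> are grouped with the component of \<open>x0\<close>, so that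
  their best matches lie in that component rather than among the isolated vertices.\<close>

definition anchor :: "'a set" where
  "anchor = component x0 \<union> {x \<in> V. component x = {x} \<and> \<sigma> x = \<sigma> x0}"

definition color_class :: "'a \<Rightarrow> 'a set" where
  "color_class x = {z \<in> component x. \<sigma> z = \<sigma> x}"

definition local_clusters :: "'a set set" where
  "local_clusters = (\<lambda>x. {x}) ` V \<union> component ` V \<union> color_class ` V"

definition clusters :: "'a set set" where
  "clusters = {V, anchor} \<union> local_clusters"

lemma local_clustersE:
  assumes "C \<in> local_clusters"
  obtains x where "x \<in> V" "C = {x} \<or> C = component x \<or> C = color_class x" "x \<in> C"
    "C \<subseteq> component x"
  using assms connected_component_self[of _ V E] unfolding local_clusters_def color_class_def
  by (elim UnE imageE) auto

lemma anchor_subset: "anchor \<subseteq> V"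
  unfolding anchor_def using connected_component_subset[of V E x0] by auto

lemma component_subset_anchor:
  assumes "z \<in> anchor"
  shows "component z \<subseteq> anchor"
proof (cases "z \<in> component x0")
  case True
  then show ?thesis
    unfolding anchor_def using connected_component_eq[OF True] by blast
next
  case False
  then have "component z = {z}"
    using assms unfolding anchor_def by blast
  then show ?thesis
    using assms by simp
qed

lemma laminar_with_component_closed:
  assumes closed: "\<And>z. z \<in> X \<Longrightarrow> component z \<subseteq> X" and D: "D \<subseteq> component x"
  shows "D \<subseteq> X \<or> X \<inter> D = {}"
proof (cases "X \<inter> D = {}")
  case False
  then obtain z where "z \<in> X" "z \<in> component x"
    using D by blast
  then show ?thesis
    using closed[of z] connected_component_eq[of z V E x] D by auto
qed simp

lemma laminar_local_clusters:
  assumes "C \<in> local_clusters" "D \<in> local_clusters"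
  shows "C \<subseteq> D \<or> D \<subseteq> C \<or> C \<inter> D = {}"
proof (cases "C \<inter> D = {}")
  case False
  then obtain z where z: "z \<in> C" "z \<in> D"
    by blast
  obtain x where x: "C = {x} \<or> C = component x \<or> C = color_class x" "C \<subseteq> component x"
    using assms(1) by (rule local_clustersE)
  obtain y where y: "D = {y} \<or> D = component y \<or> D = color_class y" "D \<subseteq> component y"
    using assms(2) by (rule local_clustersE)
  have "component z = component x" "component z = component y"
    using connected_component_eq[OF subsetD[OF x(2) z(1)]] connected_component_eq[OF subsetD[OF y(2) z(2)]]
    by simp_all
  then have same: "component x = component y"
    by simp
  have "\<sigma> x = \<sigma> y" if "C = color_class x" "D = color_class y"
    using z that unfolding color_class_def by simp
  then show ?thesis
    using x(1) y(1) z same unfolding color_class_def by auto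
qed simp

lemma hierarchy_clusters: "hierarchy V clusters"
  unfolding hierarchy_def
proof (intro conjI ballI)
  have closed: "\<And>z. z \<in> X \<Longrightarrow> component z \<subseteq> X" if "X \<in> {V, anchor}" for X
    using that component_subset_anchor connected_component_subset[of V E] by auto
  show "finite V"
    by (rule finite_V)
  show "clusters \<subseteq> Pow V"
  proof
    fix C assume "C \<in> clusters"
    then consider "C \<in> {V, anchor}" | "C \<in> local_clusters"
      unfolding clusters_def by blast
    then show "C \<in> Pow V"
    proof cases
      case 2
      then show ?thesis
        using connected_component_subset[of V E] by (auto elim!: local_clustersE)
    qed (use anchor_subset in auto)
  qed
  show "V \<in> clusters"
    unfolding clusters_def by simp
  show "{} \<notin> clusters"
  proof
    assume "{} \<in> clusters"
    then consider "{} \<in> {V, anchor}" | "{} \<in> local_clusters"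
      unfolding clusters_def by blast
    then show False
    proof cases
      case 1
      moreover have "x0 \<in> anchor"
        unfolding anchor_def using connected_component_self[OF edge0_facts(1)] by blast
      ultimately show False
        using edge0_facts(1) by auto
    next
      case 2
      then show False
        by (rule local_clustersE) simp
    qed
  qed
  show "{x} \<in> clusters" if "x \<in> V" for x
    unfolding clusters_def local_clusters_def using that by blast
  fix C D assume "C \<in> clusters" "D \<in> clusters"
  then consider "C \<in> {V, anchor}" "D \<in> {V, anchor}" | "C \<in> {V, anchor}" "D \<in> local_clusters"
    | "C \<in> local_clusters" "D \<in> {V, anchor}" | "C \<in> local_clusters" "D \<in> local_clusters"
    unfolding clusters_def by blast
  then show "C \<subseteq> D \<or> D \<subseteq> C \<or> C \<inter> D = {}"
  proof cases
    case 1
    then show ?thesis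
      using anchor_subset by auto
  next
    case 2
    obtain x where "D \<subseteq> component x"
      using 2(2) by (rule local_clustersE)
    then show ?thesis
      using laminar_with_component_closed[of C D x] closed[OF 2(1)] by blast
  next
    case 3
    obtain x where "C \<subseteq> component x"
      using 3(1) by (rule local_clustersE)
    then show ?thesis
      using laminar_with_component_closed[of D C x] closed[OF 3(2)] by blast
  next
    case 4
    then show ?thesis
      by (rule laminar_local_clusters)
  qed
qed

abbreviation lc :: "'a \<Rightarrow> 'a \<Rightarrow> 'a set" where
  "lc \<equiv> least_cluster clusters"

lemma component_subset_least_cluster:
  assumes xy: "x \<in> V" "y \<in> V" "\<sigma> x \<noteq> \<sigma> y"
  shows "component x \<subseteq> lc x y"
proof -
  have L: "lc x y \<in> clusters" "x \<in> lc x y" "y \<in> lc x y"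
    using least_cluster_in_hierarchy[OF hierarchy_clusters xy(1,2)] least_cluster_mem by auto
  then consider "lc x y \<in> {V, anchor}" | "lc x y \<in> local_clusters"
    unfolding clusters_def by blast
  then show ?thesis
  proof cases
    case 1
    then consider "lc x y = V" | "lc x y = anchor"
      by blast
    then show ?thesis
      using component_subset_anchor L(2) connected_component_subset[of V E x] by cases simp_all
  next
    case 2
    then obtain z where z: "lc x y = {z} \<or> lc x y = component z \<or> lc x y = color_class z"
      "lc x y \<subseteq> component z"
      by (rule local_clustersE)
    have "component x = component z"
      using connected_component_eq[OF subsetD[OF z(2) L(2)]] .
    moreover have "lc x y \<noteq> {z}" "lc x y \<noteq> color_class z"
      using L(2,3) xy(3) unfolding color_class_def by auto
    ultimately show ?thesis
      using z(1) by auto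
  qed
qed

lemma least_cluster_eq_component:
  assumes "x \<in> V" "y \<in> V" "y \<in> component x" "\<sigma> x \<noteq> \<sigma> y"
  shows "lc x y = component x"
proof -
  have "component x \<in> clusters"
    unfolding clusters_def local_clusters_def using assms(1) by blast
  then have "lc x y \<subseteq> component x"
    using least_cluster_le connected_component_self[OF assms(1)] assms(3) by metis
  then show ?thesis
    using component_subset_least_cluster[OF assms(1,2,4)] by blast
qed

lemma least_cluster_in_components_iff:
  assumes xy: "x \<in> V" "y \<in> V" "x \<noteq> y"
  shows "lc x y \<in> component ` V \<longleftrightarrow> {x, y} \<in> E"
proof
  assume "{x, y} \<in> E"
  then show "lc x y \<in> component ` V"
    using least_cluster_eq_component edge_iff xy by auto
next
  assume "lc x y \<in> component ` V"
  then obtain z where z: "lc x y = component z"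
    by blast
  have "component x = component z"
    using connected_component_eq least_cluster_mem(1)[of x clusters y] z by metis
  then have y: "y \<in> component x"
    using least_cluster_mem(2)[of y clusters x] z by simp
  have "\<sigma> x \<noteq> \<sigma> y"
  proof
    assume same: "\<sigma> x = \<sigma> y"
    have "color_class x \<in> clusters"
      unfolding clusters_def local_clusters_def using xy(1) by blast
    moreover have "x \<in> color_class x" "y \<in> color_class x"
      unfolding color_class_def using connected_component_self[OF xy(1)] y same by auto
    ultimately have "component x \<subseteq> color_class x"
      using least_cluster_le z \<open>component x = component z\<close> by metis
    moreover have "component x \<noteq> {x}"
      using y xy(3) by auto
    ultimately show False
      using component_other_color[OF xy(1)] unfolding color_class_def by blast
  qed
  then show "{x, y} \<in> E"
    using edge_iff xy y by blast
qed

abbreviation cbm :: "'a \<Rightarrow> 'a \<Rightarrow> bool" where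
  "cbm \<equiv> cluster_best_match clusters \<sigma> V"

lemma cluster_best_match_in_component:
  assumes bm: "cbm x y" and "component x \<noteq> {x}"
  shows "y \<in> component x"
proof -
  have xy: "x \<in> V" "y \<in> V" "\<sigma> x \<noteq> \<sigma> y"
    using bm unfolding cluster_best_match_def by blast+
  obtain z where z: "z \<in> component x" "z \<in> V" "\<sigma> z \<noteq> \<sigma> x"
    using component_other_color[OF xy(1) assms(2)] by blast
  have "\<sigma> z = \<sigma> y"
    using two_colors_eq[OF two_colors z(2) xy(1) xy(2)] z(3) xy(3) by simp
  then have "lc x y \<subseteq> lc x z"
    using bm z(2) unfolding cluster_best_match_def by blast
  also have "\<dots> = component x"
    using least_cluster_eq_component[OF xy(1) z(2) z(1)] z(3) by simp
  finally show ?thesis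
    using least_cluster_mem(2)[of y clusters x] by blast
qed

lemma not_cluster_best_match_isolated:
  assumes p: "p \<in> V" "component p = {p}" "\<sigma> p = \<sigma> x0" and q: "component q = {q}"
  shows "\<not> cbm p q"
proof
  assume bm: "cbm p q"
  then have q_V: "q \<in> V" and q_col: "\<sigma> q \<noteq> \<sigma> x0"
    using p(3) unfolding cluster_best_match_def by auto
  have "\<sigma> y0 = \<sigma> q"
    using two_colors_eq[OF two_colors edge0_facts(2,1) q_V] edge0_facts(5) q_col by simp
  then have "lc p q \<subseteq> lc p y0"
    using bm edge0_facts(2) unfolding cluster_best_match_def by simp
  moreover have "anchor \<in> clusters" "p \<in> anchor" "y0 \<in> anchor"
    unfolding clusters_def anchor_def using p edge0_facts(4) by auto
  then have "lc p y0 \<subseteq> anchor"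
    by (rule least_cluster_le)
  ultimately have "q \<in> anchor"
    using least_cluster_mem(2)[of q clusters p] by blast
  then have "q \<in> component x0"
    unfolding anchor_def using q_col by blast
  then have "component x0 = {q}"
    using connected_component_eq q by metis
  moreover have "x0 \<in> component x0"
    by (rule connected_component_self[OF edge0_facts(1)])
  ultimately show False
    using edge0_facts(3,4) by simp
qed

lemma reciprocal_cluster_best_matches: "{{x, y} | x y. cbm x y \<and> cbm y x} = E"
proof (intro subset_antisym subsetI)
  fix e assume "e \<in> {{x, y} | x y. cbm x y \<and> cbm y x}"
  then obtain x y where e: "e = {x, y}" and bm: "cbm x y" "cbm y x"
    by blast
  then have xy: "x \<in> V" "y \<in> V" "\<sigma> x \<noteq> \<sigma> y"
    unfolding cluster_best_match_def by blast+
  have "y \<in> component x"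
  proof (cases "component x = {x} \<and> component y = {y}")
    case True
    have "\<sigma> x = \<sigma> x0 \<or> \<sigma> y = \<sigma> x0"
      using two_colors_eq[OF two_colors xy(1) edge0_facts(1) xy(2)] xy(3) by metis
    then show ?thesis
      using not_cluster_best_match_isolated True xy bm by blast
  next
    case False
    then consider "component x \<noteq> {x}" | "component y \<noteq> {y}"
      by blast
    then show ?thesis
    proof cases
      case 1
      then show ?thesis
        by (rule cluster_best_match_in_component[OF bm(1)])
    next
      case 2
      then have "x \<in> component y"
        by (rule cluster_best_match_in_component[OF bm(2)])
      then have "component x = component y"
        by (rule connected_component_eq)
      then show ?thesis
        using connected_component_self[OF xy(2)] by simp
    qed
  qed
  then show "e \<in> E"
    using edge_iff xy e by blast
next
  fix e assume "e \<in> E"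
  then obtain x y where e: "e = {x, y}" "x \<noteq> y" "x \<in> V" "y \<in> V"
    by (rule simple_graph_edgeE[OF simple])
  then have y: "y \<in> component x" "\<sigma> x \<noteq> \<sigma> y"
    using edge_iff \<open>e \<in> E\<close> by blast+
  then have x: "x \<in> component y"
    using connected_component_eq[OF y(1)] connected_component_self[OF e(3)] by blast
  have "cbm x y" "cbm y x"
    unfolding cluster_best_match_def
    using e(3,4) y x least_cluster_eq_component component_subset_least_cluster by auto
  then show "e \<in> {{x, y} | x y. cbm x y \<and> cbm y x}"
    using e(1) by blast
qed

theorem is_RBMG_and_orthology_graph: "is_RBMG V E \<sigma> \<and> orthology_graph V E"
  using is_RBMG_of_hierarchy[OF hierarchy_clusters proper reciprocal_cluster_best_matches]
    orthology_graph_of_hierarchy[OF hierarchy_clusters least_cluster_in_components_iff[symmetric]]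
  by blast

lemma component_edges:
  assumes x: "x \<in> V"
  shows "{e \<in> E. e \<subseteq> component x} =
    {{a, b} | a b. a \<in> color_class x \<and> b \<in> component x - color_class x}"
proof (intro subset_antisym subsetI)
  fix e assume e: "e \<in> {e \<in> E. e \<subseteq> component x}"
  then have "e \<in> E"
    by simp
  then obtain u v where uv: "e = {u, v}" "u \<noteq> v" "u \<in> V" "v \<in> V"
    by (rule simple_graph_edgeE[OF simple])
  have "\<sigma> u \<noteq> \<sigma> v"
    using properly_colored_edgeD[OF proper] \<open>e \<in> E\<close> uv(1) by blast
  then have "\<sigma> u = \<sigma> x \<and> \<sigma> v \<noteq> \<sigma> x \<or> \<sigma> v = \<sigma> x \<and> \<sigma> u \<noteq> \<sigma> x"
    using two_colors_eq[OF two_colors uv(3) x uv(4)] by metis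
  moreover have "u \<in> component x" "v \<in> component x"
    using e uv(1) by auto
  ultimately show "e \<in> {{a, b} | a b. a \<in> color_class x \<and> b \<in> component x - color_class x}"
    unfolding color_class_def uv(1) doubleton_in_join_iff by auto
next
  fix e assume "e \<in> {{a, b} | a b. a \<in> color_class x \<and> b \<in> component x - color_class x}"
  then obtain a b where e: "e = {a, b}" and ab: "a \<in> component x" "\<sigma> a = \<sigma> x"
    "b \<in> component x" "\<sigma> b \<noteq> \<sigma> x"
    unfolding color_class_def by blast
  have "b \<in> component a"
    using connected_component_eq[OF ab(1)] ab(3) by simp
  moreover have "a \<in> V" "b \<in> V"
    using ab(1,3) connected_component_subset[of V E x] by auto
  ultimately have "{a, b} \<in> E"
    using edge_iff ab(2,4) by simp
  then show "e \<in> {e \<in> E. e \<subseteq> component x}"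
    using e ab(1,3) by simp
qed

lemma hc_cograph_component:
  assumes x: "x \<in> V"
  shows "hc_cograph \<sigma> (component x) {e \<in> E. e \<subseteq> component x}"
proof (cases "component x = {x}")
  case True
  have "\<not> e \<subseteq> {x}" if "e \<in> E" for e
    using simple_graph_edgeE[OF simple that] by (metis insert_subset singletonD)
  then have "{e \<in> E. e \<subseteq> component x} = {}"
    using True by blast
  with True show ?thesis
    by (metis K1)
next
  case False
  obtain z where z: "z \<in> component x" "z \<in> V" "\<sigma> z \<noteq> \<sigma> x"
    using component_other_color[OF x False] by blast
  have fin: "finite (component x)"
    using finite_subset[OF connected_component_subset finite_V] .
  have "hc_cograph \<sigma> (color_class x \<union> (component x - color_class x))
      {{a, b} | a b. a \<in> color_class x \<and> b \<in> component x - color_class x}"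
  proof (rule hc_cograph_complete_bipartite)
    show "finite (color_class x)" "finite (component x - color_class x)"
      using fin unfolding color_class_def by simp_all
    show "color_class x \<noteq> {}"
      using connected_component_self[OF x] unfolding color_class_def by blast
    show "component x - color_class x \<noteq> {}"
      using z unfolding color_class_def by blast
    show "\<sigma> b = \<sigma> z" if "b \<in> component x - color_class x" for b
    proof -
      have "b \<in> V" "\<sigma> b \<noteq> \<sigma> x"
        using that connected_component_subset[of V E x] unfolding color_class_def by auto
      then show ?thesis
        using two_colors_eq[OF two_colors \<open>b \<in> V\<close> x z(2)] z(3) by auto
    qed
  qed (use z(3) in \<open>auto simp: color_class_def\<close>)
  moreover have "color_class x \<union> (component x - color_class x) = component x"
    unfolding color_class_def by blast
  ultimately show ?thesis
    using component_edges[OF x] by simp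
qed

lemma edges_Union_components: "E = (\<Union>x\<in>V. {e \<in> E. e \<subseteq> component x})"
proof (intro subset_antisym subsetI)
  fix e assume "e \<in> E"
  then obtain u v where uv: "e = {u, v}" "u \<noteq> v" "u \<in> V" "v \<in> V"
    by (rule simple_graph_edgeE[OF simple])
  then have "e \<subseteq> component u"
    using connected_component_self[OF uv(3)] connected_component_edge[OF simple] \<open>e \<in> E\<close> by simp
  then show "e \<in> (\<Union>x\<in>V. {e \<in> E. e \<subseteq> component x})"
    using \<open>e \<in> E\<close> uv(3) by blast
qed blast

theorem hc_cograph: "hc_cograph \<sigma> V E"
proof -
  define K0 where "K0 = component x0"
  define \<C> where "\<C> = component ` (V - K0)"
  define F where "F C = {e \<in> E. e \<subseteq> C}" for C
  have "K0 \<subseteq> V" "x0 \<in> K0"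
    unfolding K0_def using connected_component_subset connected_component_self[OF edge0_facts(1)]
    by simp_all
  have "component x = K0" if "x \<in> K0" for x
    using connected_component_eq[of x V E x0] that unfolding K0_def by simp
  then have "component ` K0 = {K0}"
    using image_constant[OF \<open>x0 \<in> K0\<close>] by simp
  moreover have "V = K0 \<union> (V - K0)"
    using \<open>K0 \<subseteq> V\<close> by blast
  ultimately have components: "component ` V = insert K0 \<C>"
    unfolding \<C>_def by (metis image_Un insert_is_Un)
  have "\<sigma> ` K0 = \<sigma> ` V"
    unfolding K0_def using two_colors_subset_eq[OF two_colors connected_component_subset]
      connected_component_self[OF edge0_facts(1)] edge0_facts(4,5) by blast
  have "hc_cograph \<sigma> (K0 \<union> \<Union>\<C>) (F K0 \<union> \<Union>(F ` \<C>))"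
  proof (rule hc_cograph_Union)
    show "hc_cograph \<sigma> K0 (F K0)"
      unfolding K0_def F_def by (rule hc_cograph_component[OF edge0_facts(1)])
    show "finite \<C>"
      unfolding \<C>_def using finite_V by simp
    show "pairwise disjnt \<C>"
      unfolding \<C>_def by (rule pairwise_disjnt_connected_components)
    fix C assume C: "C \<in> \<C>"
    then obtain x where x: "x \<in> V" "x \<notin> K0" "C = component x"
      unfolding \<C>_def by blast
    show "hc_cograph \<sigma> C (F C)"
      unfolding x(3) F_def by (rule hc_cograph_component[OF x(1)])
    show "C \<inter> K0 = {}"
      using connected_component_eq_or_disjoint[of V E x x0] connected_component_self[OF x(1)] x(2,3)
      unfolding K0_def by auto
    show "\<sigma> ` C \<subseteq> \<sigma> ` K0"
      using connected_component_subset[of V E x] x(3) \<open>\<sigma> ` K0 = \<sigma> ` V\<close> by auto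
  qed
  moreover have "K0 \<union> \<Union>\<C> = V"
    using Union_connected_components[of V E] components by simp
  moreover have "F K0 \<union> \<Union>(F ` \<C>) = E"
  proof -
    have "F K0 \<union> \<Union>(F ` \<C>) = \<Union>(F ` component ` V)"
      using components by simp
    also have "\<dots> = E"
      using edges_Union_components unfolding F_def by (simp add: image_image)
    finally show ?thesis .
  qed
  ultimately show ?thesis
    by simp
qed

end

theorem mainTheorem2:
  fixes V :: "'a set" and E :: "'a set set" and \<sigma> :: "'a \<Rightarrow> 'c"
  assumes "simple_graph V E"
    and "card (\<sigma> ` V) = 2"
  shows "(is_n_RBMG 2 V E \<sigma> \<longleftrightarrow>
            properly_colored E \<sigma> \<and> bicluster_graph V E \<and> E \<noteq> {})
       \<and> (properly_colored E \<sigma> \<and> bicluster_graph V E \<and> E \<noteq> {} \<longleftrightarrow>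
            is_n_RBMG 2 V E \<sigma> \<and> orthology_graph V E)
       \<and> (is_n_RBMG 2 V E \<sigma> \<and> orthology_graph V E \<longleftrightarrow>
            is_n_hc_cograph 2 V E \<sigma>)"
proof -
  let ?bicluster = "properly_colored E \<sigma> \<and> bicluster_graph V E \<and> E \<noteq> {}"
  have "?bicluster" if "is_n_RBMG 2 V E \<sigma>"
    using that is_RBMG_two_colors_bicluster[OF assms] unfolding is_n_RBMG_def by blast
  moreover have "?bicluster" if "is_n_hc_cograph 2 V E \<sigma>"
    using that hc_cograph_two_colors_bicluster unfolding is_n_hc_cograph_def by blast
  moreover have "is_n_RBMG 2 V E \<sigma> \<and> orthology_graph V E \<and> is_n_hc_cograph 2 V E \<sigma>"
    if bicluster: "?bicluster"
  proof -
    obtain e where "e \<in> E"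
      using bicluster by blast
    then obtain x0 y0 where "{x0, y0} \<in> E"
      using simple_graph_edgeE[OF assms(1)] by metis
    then interpret two_colored_bicluster V E \<sigma> x0 y0
      using assms bicluster by unfold_locales auto
    show ?thesis
      using is_RBMG_and_orthology_graph hc_cograph assms(2)
      unfolding is_n_RBMG_def is_n_hc_cograph_def by blast
  qed
  ultimately show ?thesis
    by blast
qed

end
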